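(* Let $c>0$. For $T>0$, $t\in[0,T]$ and a function $g$ on $\mathbb{R}^2$ define \[ \|\hat g\|_{t}:=\left\|\frac{(1+|\xi|)^3\hat g(\xi)}{e^{-c|\xi|t}+e^{-c|\xi|(T-t)}}\right\|_{L^\infty(\mathbb{R}^2_\xi)}. \] There exists $K>0$ such that for every $T>0$, every $t\in[0,T]$, and all functions $f,g$ with $\|\hat f\|_t,\|\hat g\|_t<+\infty$, \[ \|\widehat{fg}\|_t\leqslant K\|\hat f\|_t\|\hat g\|_t. \]
   Context: $\hat g$ is the Fourier transform on $\mathbb{R}^2$ with Fourier variable $\xi$, normalized so that $\widehat{fg}=\hat f*\hat g$ (convolution in $\xi$). *)

theory Defs
  imports "HOL-Analysis.Analysis" "HOL-Probability.Essential_Supremum"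
begin

text \<open>Weighted Fourier-side norm: the L-infinity (essential supremum w.r.t. Lebesgue
measure) norm of (1+|xi|)^3 F(xi) / (exp(-c|xi|t) + exp(-c|xi|(T-t))), where F plays
the role of the Fourier transform of a function on R^2.\<close>
definition wnorm :: "real \<Rightarrow> real \<Rightarrow> real \<Rightarrow> (real^2 \<Rightarrow> complex) \<Rightarrow> ereal" where
  "wnorm c T t F = esssup lborel (\<lambda>\<xi>. ereal ((1 + norm \<xi>) ^ 3 * cmod (F \<xi>)
      / (exp (- c * norm \<xi> * t) + exp (- c * norm \<xi> * (T - t)))))"

text \<open>Convolution in the Fourier variable; by the normalization of the Fourier transform,
the transform of a product f g is the convolution of the transforms.\<close>
definition fconv :: "(real^2 \<Rightarrow> complex) \<Rightarrow> (real^2 \<Rightarrow> complex) \<Rightarrow> real^2 \<Rightarrow> complex" where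
  "fconv F G = (\<lambda>\<xi>. LINT \<eta>|lborel. F (\<xi> - \<eta>) * G \<eta>)"

end

theory Submission
  imports Defs
begin

(* Write w for the exponential weight and q(xi) = (1 + |xi|)^3, so that a finite norm a means
   |F| <= a w / q almost everywhere. The weight is
   submultiplicative up to a factor 4: for r, u in {t, T - t} the triangle inequality gives
   exp(-c|x|r) exp(-c|y|u) <= exp(-c|x+y| min(r,u)), and min(r,u) is again t or T - t.
   The polynomial weight satisfies q(x+y) <= 8 (q x + q y), i.e.
   1/(q x q y) <= 8/q(x+y) (1/q x + 1/q y). Hence
   |F(xi - eta) G(eta)| <= 32 a b w(xi)/q(xi) (1/q(xi - eta) + 1/q(eta)), and integrating in eta
   gives the bound with K = 64 * integral of 1/q, which is finite since 3 > 2 = dim R^2. *)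

lemma succ_power_diff_le:
  fixes k :: real
  assumes "0 \<le> k"
  shows "(k + 1) ^ n - k ^ n \<le> real n * (k + 1) ^ (n - 1)"
proof -
  have term_le: "k ^ (n - Suc i) * (k + 1) ^ i \<le> (k + 1) ^ (n - 1)" if "i < n" for i
  proof -
    have "k ^ (n - Suc i) * (k + 1) ^ i \<le> (k + 1) ^ (n - Suc i) * (k + 1) ^ i"
      using assms by (intro mult_right_mono power_mono) auto
    also have "\<dots> = (k + 1) ^ (n - 1)"
      using that by (simp add: power_add[symmetric])
    finally show ?thesis .
  qed
  have "(k + 1) ^ n - k ^ n = (\<Sum>i<n. k ^ (n - Suc i) * (k + 1) ^ i)"
    by (simp add: power_diff_sumr2)
  also have "\<dots> \<le> (\<Sum>i<n. (k + 1) ^ (n - 1))"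
    by (intro sum_mono term_le) simp
  finally show ?thesis by simp
qed

lemma integrable_inverse_one_plus_norm_power:
  "integrable lborel (\<lambda>x::'a::euclidean_space. 1 / (1 + norm x) ^ (DIM('a) + 1))"
proof -
  define n where "n = DIM('a)"
  define V where "V = unit_ball_vol (real n)"
  have "V \<ge> 0" unfolding V_def by simp
  define A where "A k = cball (0::'a) (real k + 1) - ball 0 (real k)" for k :: nat
  have A_sets [measurable]: "A k \<in> sets lborel" for k
    unfolding A_def by auto
  have emeasure_A: "emeasure lborel (A k) \<le> ennreal (V * n * (real k + 1) ^ (n - 1))" for k
  proof -
    have "emeasure lborel (A k)
        = emeasure lborel (cball (0::'a) (real k + 1)) - emeasure lborel (ball (0::'a) (real k))"
      unfolding A_def using emeasure_lborel_ball_finite[of "0::'a" "real k"]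
      by (intro emeasure_Diff) auto
    also have "\<dots> = ennreal (V * ((real k + 1) ^ n - real k ^ n))"
      using \<open>V \<ge> 0\<close> by (simp add: emeasure_cball emeasure_ball V_def n_def ennreal_minus
          right_diff_distrib power_mono)
    also have "\<dots> \<le> ennreal (V * n * (real k + 1) ^ (n - 1))"
      using \<open>V \<ge> 0\<close> succ_power_diff_le[of "real k" n]
      by (intro ennreal_leI) (auto simp: mult.assoc intro: mult_left_mono)
    finally show ?thesis .
  qed
  have pointwise: "ennreal (1 / (1 + norm x) ^ (n + 1))
      \<le> (\<Sum>k. ennreal (1 / (real k + 1) ^ (n + 1)) * indicator (A k) x)" for x :: 'a
  proof -
    define k where "k = nat \<lfloor>norm x\<rfloor>"
    have k: "real k \<le> norm x" "norm x \<le> real k + 1"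
      unfolding k_def by (simp_all add: of_nat_floor)
    then have "x \<in> A k" unfolding A_def by auto
    moreover have "(real k + 1) ^ (n + 1) \<le> (1 + norm x) ^ (n + 1)"
      using k by (intro power_mono) auto
    ultimately have "ennreal (1 / (1 + norm x) ^ (n + 1))
        \<le> ennreal (1 / (real k + 1) ^ (n + 1)) * indicator (A k) x"
      by (auto intro!: ennreal_leI divide_left_mono simp: add_pos_nonneg)
    also have "\<dots> \<le> (\<Sum>j. ennreal (1 / (real j + 1) ^ (n + 1)) * indicator (A j) x)"
      (is "?a \<le> suminf ?f")
    proof -
      have "?a = sum ?f {k}"
        by (simp only: sum.insert sum.empty finite.emptyI empty_iff add_0_right not_False_eq_True)
      also have "\<dots> \<le> suminf ?f"
        by (rule sum_le_suminf[OF summableI]) auto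
      finally show ?thesis .
    qed
    finally show ?thesis .
  qed
  have shell_bound: "ennreal (1 / (real k + 1) ^ (n + 1)) * emeasure lborel (A k)
      \<le> ennreal (V * n / (real k + 1) ^ 2)" for k
  proof -
    have "n \<ge> 1" unfolding n_def by (simp add: Suc_leI)
    have power_split: "(real k + 1) ^ (n + 1) = (real k + 1) ^ (n - 1) * (real k + 1) ^ 2"
      using \<open>n \<ge> 1\<close> by (simp add: power_add[symmetric])
    have "ennreal (1 / (real k + 1) ^ (n + 1)) * emeasure lborel (A k)
        \<le> ennreal (1 / (real k + 1) ^ (n + 1)) * ennreal (V * n * (real k + 1) ^ (n - 1))"
      by (intro mult_left_mono emeasure_A) simp
    also have "\<dots> = ennreal (V * n / (real k + 1) ^ 2)"
      using \<open>V \<ge> 0\<close> power_split by (simp add: ennreal_mult'[symmetric])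
    finally show ?thesis .
  qed
  have "summable (\<lambda>k. V * n / (real k + 1) ^ 2)"
  proof -
    have "summable (\<lambda>k. inverse (real (Suc k) ^ 2))"
      using inverse_power_summable[of 2, where 'a=real] by (subst summable_Suc_iff) simp
    from summable_mult[OF this, of "V * n"] show ?thesis
      by (simp add: divide_inverse add.commute)
  qed
  have "(\<integral>\<^sup>+x. ennreal (1 / (1 + norm x) ^ (n + 1)) \<partial>(lborel :: 'a measure))
      \<le> (\<integral>\<^sup>+x. (\<Sum>k. ennreal (1 / (real k + 1) ^ (n + 1)) * indicator (A k) x) \<partial>lborel)"
    by (intro nn_integral_mono pointwise)
  also have "\<dots> = (\<Sum>k. \<integral>\<^sup>+x. ennreal (1 / (real k + 1) ^ (n + 1)) * indicator (A k) x \<partial>lborel)"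
    by (rule nn_integral_suminf) measurable
  also have "\<dots> = (\<Sum>k. ennreal (1 / (real k + 1) ^ (n + 1)) * emeasure lborel (A k))"
    by (simp only: nn_integral_cmult_indicator[OF A_sets])
  also have "\<dots> \<le> (\<Sum>k. ennreal (V * n / (real k + 1) ^ 2))"
    by (intro suminf_le summableI shell_bound)
  also have "\<dots> < \<infinity>"
    using \<open>summable (\<lambda>k. V * n / (real k + 1) ^ 2)\<close> \<open>V \<ge> 0\<close>
    by (simp add: ennreal_suminf_neq_top top.not_eq_extremum)
  finally show ?thesis
    unfolding n_def by (intro integrableI_nonneg) auto
qed

lemma one_plus_norm_add_power_le:
  fixes x y :: "'a::real_normed_vector"
  shows "(1 + norm (x + y)) ^ n \<le> 2 ^ n * ((1 + norm x) ^ n + (1 + norm y) ^ n)"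
proof -
  define m where "m = max (1 + norm x) (1 + norm y)"
  have "1 + norm (x + y) \<le> 2 * m"
    unfolding m_def using norm_triangle_ineq[of x y] by (auto simp: max_def)
  then have "(1 + norm (x + y)) ^ n \<le> (2 * m) ^ n"
    by (intro power_mono) auto
  also have "\<dots> = 2 ^ n * m ^ n"
    by (simp add: power_mult_distrib)
  also have "m ^ n \<le> (1 + norm x) ^ n + (1 + norm y) ^ n"
    unfolding m_def by (cases "norm x \<le> norm y") (auto simp: max_def)
  finally show ?thesis by simp
qed

definition decay_weight :: "real \<Rightarrow> real \<Rightarrow> real \<Rightarrow> 'a::real_normed_vector \<Rightarrow> real" where
  "decay_weight c T t \<xi> = exp (- c * norm \<xi> * t) + exp (- c * norm \<xi> * (T - t))"

lemma decay_weight_pos: "0 < decay_weight c T t \<xi>"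
  unfolding decay_weight_def by (intro add_pos_pos) auto

lemma borel_measurable_decay_weight [measurable]:
  "decay_weight c T t \<in> borel_measurable borel"
  unfolding decay_weight_def by measurable

lemma decay_weight_mult_le:
  fixes x y :: "'a::real_normed_vector"
  assumes "0 \<le> c" "0 \<le> t" "t \<le> T"
  shows "decay_weight c T t x * decay_weight c T t y \<le> 4 * decay_weight c T t (x + y)"
proof -
  have term_le: "exp (- c * norm x * r) * exp (- c * norm y * u) \<le> decay_weight c T t (x + y)"
    if "r \<in> {t, T - t}" "u \<in> {t, T - t}" for r u
  proof -
    have "norm (x + y) * min r u \<le> (norm x + norm y) * min r u"
      using that assms by (intro mult_right_mono norm_triangle_ineq) auto
    also have "\<dots> \<le> norm x * r + norm y * u"
      by (simp add: distrib_right add_mono mult_left_mono)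
    finally have "c * (norm (x + y) * min r u) \<le> c * (norm x * r + norm y * u)"
      using assms by (intro mult_left_mono) auto
    then have "exp (- c * norm x * r) * exp (- c * norm y * u) \<le> exp (- c * norm (x + y) * min r u)"
      by (simp add: exp_add[symmetric] algebra_simps)
    also have "\<dots> \<le> decay_weight c T t (x + y)"
      using that unfolding decay_weight_def
      by (cases "r \<le> u") (auto simp: min_def add_increasing add_increasing2)
    finally show ?thesis .
  qed
  show ?thesis
    using term_le[of t t] term_le[of t "T - t"] term_le[of "T - t" t] term_le[of "T - t" "T - t"]
    unfolding decay_weight_def[of c T t x] decay_weight_def[of c T t y]
    by (simp add: algebra_simps)
qed

lemma weighted_product_le:
  fixes x y :: "'a::real_normed_vector" and u v :: "'b::real_normed_div_algebra"
  assumes "0 \<le> c" "0 \<le> t" "t \<le> T" "0 \<le> a" "0 \<le> b"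
    and "norm u \<le> a * decay_weight c T t x / (1 + norm x) ^ 3"
    and "norm v \<le> b * decay_weight c T t y / (1 + norm y) ^ 3"
  shows "norm (u * v) \<le> 32 * a * b * decay_weight c T t (x + y) / (1 + norm (x + y)) ^ 3
           * (1 / (1 + norm x) ^ 3 + 1 / (1 + norm y) ^ 3)"
proof -
  let ?w = "decay_weight c T t" and ?q = "\<lambda>z::'a. (1 + norm z) ^ 3"
  have q_pos: "0 < ?q z" for z by (simp add: add_pos_nonneg)
  have "norm (u * v) \<le> (a * ?w x / ?q x) * (b * ?w y / ?q y)"
    unfolding norm_mult using assms decay_weight_pos[of c T t x] q_pos[of x]
    by (intro mult_mono) auto
  also have "\<dots> = a * b * (?w x * ?w y) / (?q x * ?q y)"
    by simp
  also have "\<dots> \<le> a * b * (4 * ?w (x + y)) / (?q x * ?q y)"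
    using assms q_pos[of x] q_pos[of y]
    by (intro divide_right_mono mult_left_mono decay_weight_mult_le) auto
  also have "\<dots> = a * b * (4 * ?w (x + y)) * (1 / (?q x * ?q y))"
    by simp
  also have "\<dots> \<le> a * b * (4 * ?w (x + y)) * (8 * (?q x + ?q y) / (?q (x + y) * ?q x * ?q y))"
  proof (rule mult_left_mono)
    have "?q (x + y) \<le> 8 * (?q x + ?q y)"
      using one_plus_norm_add_power_le[of x y 3] by simp
    then show "1 / (?q x * ?q y) \<le> 8 * (?q x + ?q y) / (?q (x + y) * ?q x * ?q y)"
      using q_pos[of x] q_pos[of y] q_pos[of "x + y"] by (simp add: divide_simps)
    show "0 \<le> a * b * (4 * ?w (x + y))"
      using assms decay_weight_pos[of c T t "x + y"] by simp
  qed
  also have "\<dots> = 32 * a * b * ?w (x + y) / ?q (x + y) * (1 / ?q x + 1 / ?q y)"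
    using q_pos[of x] q_pos[of y] q_pos[of "x + y"] by (simp add: field_simps)
  finally show ?thesis .
qed

lemma AE_lborel_diff:
  fixes P :: "'a::euclidean_space \<Rightarrow> bool"
  assumes "Measurable.pred borel P" "AE x in lborel. P x"
  shows "AE x in lborel. P (z - x)"
  using assms by (subst lborel_affine[where t=z and c="-1"]) (simp_all add: AE_density AE_distr_iff)

lemma nn_integral_lborel_diff:
  fixes h :: "'a::euclidean_space \<Rightarrow> ennreal"
  assumes [measurable]: "h \<in> borel_measurable borel"
  shows "(\<integral>\<^sup>+x. h (z - x) \<partial>lborel) = (\<integral>\<^sup>+x. h x \<partial>lborel)"
  by (subst (2) lborel_affine[where t=z and c="-1"]) (simp_all add: nn_integral_density nn_integral_distr)

lemma norm_fconv_le:
  "ennreal (norm (fconv F G \<xi>)) \<le> (\<integral>\<^sup>+\<eta>. norm (F (\<xi> - \<eta>) * G \<eta>) \<partial>lborel)"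
proof (cases "integrable lborel (\<lambda>\<eta>. F (\<xi> - \<eta>) * G \<eta>)")
  case True
  then show ?thesis
    unfolding fconv_def by (rule integral_norm_bound_ennreal)
qed (simp add: fconv_def not_integrable_integral_eq)

lemma borel_measurable_fconv [measurable]:
  assumes [measurable]: "F \<in> borel_measurable borel" "G \<in> borel_measurable borel"
  shows "fconv F G \<in> borel_measurable borel"
proof -
  have "(\<lambda>(\<xi>, \<eta>). F (\<xi> - \<eta>) * G \<eta>) \<in> borel_measurable (lborel \<Otimes>\<^sub>M (lborel :: (real^2) measure))"
    by measurable
  then have "(\<lambda>\<xi>. LINT \<eta>|lborel. F (\<xi> - \<eta>) * G \<eta>) \<in> borel_measurable lborel"
    by (rule lborel.borel_measurable_lebesgue_integral)
  then show ?thesis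
    unfolding fconv_def by simp
qed

lemma wnorm_eq_esssup:
  "wnorm c T t F = esssup lborel (\<lambda>\<xi>. ereal ((1 + norm \<xi>) ^ 3 * cmod (F \<xi>) / decay_weight c T t \<xi>))"
  by (simp add: wnorm_def decay_weight_def)

lemma wnorm_nonneg: "0 \<le> wnorm c T t F"
proof -
  have "0 = esssup lborel (\<lambda>_::real^2. 0 :: ereal)"
    by (simp add: esssup_const)
  also have "\<dots> \<le> wnorm c T t F"
    unfolding wnorm_eq_esssup by (intro esssup_mono) (auto intro!: divide_nonneg_pos decay_weight_pos)
  finally show ?thesis .
qed

lemma wnorm_finiteE:
  assumes "wnorm c T t F < \<infinity>"
  obtains a where "0 \<le> a" "wnorm c T t F = ereal a"
    "AE \<xi> in lborel. cmod (F \<xi>) \<le> a * decay_weight c T t \<xi> / (1 + norm \<xi>) ^ 3"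
proof -
  obtain a where a: "wnorm c T t F = ereal a"
    using assms wnorm_nonneg[of c T t F] by (cases "wnorm c T t F") auto
  have "AE \<xi> in lborel. ereal ((1 + norm \<xi>) ^ 3 * cmod (F \<xi>) / decay_weight c T t \<xi>) \<le> ereal a"
    unfolding a[symmetric] wnorm_eq_esssup by (rule esssup_AE)
  then have "AE \<xi> in lborel. cmod (F \<xi>) \<le> a * decay_weight c T t \<xi> / (1 + norm \<xi>) ^ 3"
    by (rule eventually_mono) (auto simp: field_simps decay_weight_pos add_pos_nonneg)
  moreover have "0 \<le> a"
    using a wnorm_nonneg[of c T t F] by simp
  ultimately show ?thesis
    using a that by blast
qed

lemma wnorm_le:
  assumes "H \<in> borel_measurable borel"
    and "\<And>\<xi>. (1 + norm \<xi>) ^ 3 * cmod (H \<xi>) \<le> M * decay_weight c T t \<xi>"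
  shows "wnorm c T t H \<le> ereal M"
  unfolding wnorm_eq_esssup
proof (rule esssup_I)
  show "(\<lambda>\<xi>. ereal ((1 + norm \<xi>) ^ 3 * cmod (H \<xi>) / decay_weight c T t \<xi>)) \<in> borel_measurable lborel"
    using assms(1) by measurable
  show "AE \<xi> in lborel. ereal ((1 + norm \<xi>) ^ 3 * cmod (H \<xi>) / decay_weight c T t \<xi>) \<le> ereal M"
    using assms(2) by (intro AE_I2) (simp add: divide_le_eq decay_weight_pos)
qed

lemma fconv_weighted_bound:
  fixes F G :: "real^2 \<Rightarrow> complex"
  assumes "0 \<le> c" "0 \<le> t" "t \<le> T" "0 \<le> a" "0 \<le> b"
    and [measurable]: "F \<in> borel_measurable borel" "G \<in> borel_measurable borel"
    and F: "AE x in lborel. cmod (F x) \<le> a * decay_weight c T t x / (1 + norm x) ^ 3"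
    and G: "AE x in lborel. cmod (G x) \<le> b * decay_weight c T t x / (1 + norm x) ^ 3"
  shows "(1 + norm \<xi>) ^ 3 * cmod (fconv F G \<xi>)
           \<le> 64 * (LINT x|lborel. 1 / (1 + norm (x :: real^2)) ^ 3) * a * b * decay_weight c T t \<xi>"
proof -
  let ?q = "\<lambda>x::real^2. (1 + norm x) ^ 3"
  define I where "I = (LINT x|lborel. 1 / ?q x)"
  define C where "C = 32 * a * b * decay_weight c T t \<xi> / ?q \<xi>"
  have q_pos: "0 < ?q x" for x by (simp add: add_pos_nonneg)
  have "0 \<le> C"
    unfolding C_def using assms q_pos[of \<xi>] decay_weight_pos[of c T t \<xi>] by simp
  have "0 \<le> I"
    unfolding I_def by (intro integral_nonneg_AE) auto
  have nn_integral_q: "(\<integral>\<^sup>+x. ennreal (1 / ?q x) \<partial>lborel) = ennreal I"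
    unfolding I_def using integrable_inverse_one_plus_norm_power[where 'a="real^2"]
    by (intro nn_integral_eq_integral) (auto simp: add_pos_nonneg)
  have F_reflected: "AE \<eta> in lborel.
      cmod (F (\<xi> - \<eta>)) \<le> a * decay_weight c T t (\<xi> - \<eta>) / ?q (\<xi> - \<eta>)"
    by (rule AE_lborel_diff[OF _ F]) measurable
  have "AE \<eta> in lborel. ennreal (cmod (F (\<xi> - \<eta>) * G \<eta>))
      \<le> ennreal C * ennreal (1 / ?q (\<xi> - \<eta>)) + ennreal C * ennreal (1 / ?q \<eta>)"
    using F_reflected G
  proof eventually_elim
    case (elim \<eta>)
    have "cmod (F (\<xi> - \<eta>) * G \<eta>) \<le> C * (1 / ?q (\<xi> - \<eta>)) + C * (1 / ?q \<eta>)"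
      using weighted_product_le[OF assms(1-5) elim] by (simp add: C_def distrib_left)
    then show ?case
      using \<open>0 \<le> C\<close>
      by (simp add: ennreal_plus[symmetric] ennreal_mult'[symmetric] ennreal_leI del: ennreal_plus)
  qed
  then have "(\<integral>\<^sup>+\<eta>. cmod (F (\<xi> - \<eta>) * G \<eta>) \<partial>lborel)
      \<le> (\<integral>\<^sup>+\<eta>. ennreal C * ennreal (1 / ?q (\<xi> - \<eta>)) + ennreal C * ennreal (1 / ?q \<eta>) \<partial>lborel)"
    by (rule nn_integral_mono_AE)
  also have "\<dots> = ennreal C * (\<integral>\<^sup>+\<eta>. ennreal (1 / ?q (\<xi> - \<eta>)) \<partial>lborel)
      + ennreal C * (\<integral>\<^sup>+\<eta>. ennreal (1 / ?q \<eta>) \<partial>lborel)"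
    by (simp add: nn_integral_add nn_integral_cmult)
  also have "\<dots> = ennreal (C * I + C * I)"
    using \<open>0 \<le> C\<close> \<open>0 \<le> I\<close> nn_integral_lborel_diff[of "\<lambda>\<eta>. ennreal (1 / ?q \<eta>)" \<xi>]
    by (simp add: nn_integral_q ennreal_mult'[symmetric] ennreal_plus[symmetric] del: ennreal_plus)
  finally have "ennreal (cmod (fconv F G \<xi>)) \<le> ennreal (C * I + C * I)"
    by (rule order.trans[OF norm_fconv_le])
  then have "cmod (fconv F G \<xi>) \<le> C * I + C * I"
    using \<open>0 \<le> C\<close> \<open>0 \<le> I\<close> by simp
  then show ?thesis
    using q_pos[of \<xi>] unfolding C_def I_def by (simp add: field_simps)
qed

theorem lemma7:
  fixes c :: real
  assumes "c > 0"
  shows "\<exists>K>0. \<forall>T>0. \<forall>t\<in>{0..T}. \<forall>F G :: real^2 \<Rightarrow> complex.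
           F \<in> borel_measurable lborel \<longrightarrow> G \<in> borel_measurable lborel \<longrightarrow>
           wnorm c T t F < \<infinity> \<longrightarrow> wnorm c T t G < \<infinity> \<longrightarrow>
           wnorm c T t (fconv F G) \<le> ereal K * wnorm c T t F * wnorm c T t G"
proof -
  define I where "I = (LINT x|lborel. 1 / (1 + norm (x :: real^2)) ^ 3)"
  define K where "K = max 1 (64 * I)"
  show ?thesis
  proof (intro exI[of _ K] conjI allI impI ballI)
    fix T t :: real and F G :: "real^2 \<Rightarrow> complex"
    assume "t \<in> {0..T}" and F_meas: "F \<in> borel_measurable lborel"
      and G_meas: "G \<in> borel_measurable lborel"
      and "wnorm c T t F < \<infinity>" "wnorm c T t G < \<infinity>"
    obtain a where "0 \<le> a" "wnorm c T t F = ereal a"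
      and F_bound: "AE x in lborel. cmod (F x) \<le> a * decay_weight c T t x / (1 + norm x) ^ 3"
      using wnorm_finiteE[OF \<open>wnorm c T t F < \<infinity>\<close>] .
    obtain b where "0 \<le> b" "wnorm c T t G = ereal b"
      and G_bound: "AE x in lborel. cmod (G x) \<le> b * decay_weight c T t x / (1 + norm x) ^ 3"
      using wnorm_finiteE[OF \<open>wnorm c T t G < \<infinity>\<close>] .
    have [measurable]: "F \<in> borel_measurable borel" "G \<in> borel_measurable borel"
      using F_meas G_meas by simp_all
    have "wnorm c T t (fconv F G) \<le> ereal (64 * I * a * b)"
    proof (rule wnorm_le)
      show "(1 + norm \<xi>) ^ 3 * cmod (fconv F G \<xi>) \<le> 64 * I * a * b * decay_weight c T t \<xi>" for \<xi>
        unfolding I_def using \<open>c > 0\<close> \<open>t \<in> {0..T}\<close> \<open>0 \<le> a\<close> \<open>0 \<le> b\<close>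
        by (intro fconv_weighted_bound F_bound G_bound) auto
    qed measurable
    also have "\<dots> \<le> ereal (K * a * b)"
      using \<open>0 \<le> a\<close> \<open>0 \<le> b\<close> by (auto simp: K_def intro!: mult_right_mono)
    also have "\<dots> = ereal K * wnorm c T t F * wnorm c T t G"
      using \<open>wnorm c T t F = ereal a\<close> \<open>wnorm c T t G = ereal b\<close> by simp
    finally show "wnorm c T t (fconv F G) \<le> ereal K * wnorm c T t F * wnorm c T t G" .
  qed (simp add: K_def)
qed

end
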